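(* Let $\Lambda=(\Delta,R)$ be a gentle bound quiver. If $\sigma$ is a maximal path in $\Lambda$, then the coextension $[\sigma]\Lambda$ is a gentle bound quiver.
   Context: Paths $\alpha_1\cdots\alpha_l$ ($l\ge1$) satisfy $s\alpha_i=t\alpha_{i+1}$; $t\sigma=t\alpha_1$ and $\alpha_1$ is the terminating arrow of $\sigma$. A bound quiver $(\Delta,R)$ is a finite quiver without isolated vertices with a set $R$ of paths of length $\ge2$ such that for some $n$ every path of length $n$ contains a subpath in $R$. It is gentle if connected and: $R$ consists of paths of length 2; each vertex has at most two outgoing and at most two incoming arrows; for each arrow $\alpha$ there is at most one arrow $\alpha'$ with $s\alpha'=t\alpha$ and $\alpha'\alpha\notin R$, at most one with $t\alpha'=s\alpha$ and $\alpha\alpha'\notin R$, at most one with $s\alpha'=t\alpha$ and $\alpha'\alpha\in R$, and at most one with $t\alpha'=s\alpha$ and $\alpha\alpha'\in R$. A path in $\Lambda$ is a path with no subpath in $R$; it is maximal if not a subpath of a longer path in $\Lambda$. For a maximal path $\sigma$ in $\Lambda$, the coextension $[\sigma]\Lambda=(\Delta',R')$ is defined by: $\Delta'$ is $\Delta$ with a new vertex $x$ and a new arrow $\alpha$ with $s\alpha=t\sigma$, $t\alpha=x$; $R'=R\cup\{\alpha\alpha' : \alpha'\in\Delta_1,\ t\alpha'=t\sigma,\ \alpha'\text{ is not the terminating arrow of }\sigma\}$. *)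

theory Defs
  imports Main
begin

text \<open>A path \<alpha>1...\<alpha>l (l \<ge> 1) is represented by the list
[\<alpha>1, ..., \<alpha>l] with s \<alpha>i = t \<alpha>(i+1); its terminating arrow is
the head of the list, and t \<sigma> = t (hd \<sigma>).\<close>

record ('v, 'a) bquiver =
  verts :: "'v set"
  arrs  :: "'a set"
  src   :: "'a \<Rightarrow> 'v"
  tgt   :: "'a \<Rightarrow> 'v"
  rels  :: "'a list set"

definition is_path :: "('v, 'a) bquiver \<Rightarrow> 'a list \<Rightarrow> bool" where
  "is_path Q p \<longleftrightarrow> p \<noteq> [] \<and> set p \<subseteq> arrs Q \<and>
     (\<forall>i. Suc i < length p \<longrightarrow> src Q (p ! i) = tgt Q (p ! Suc i))"

definition subpath :: "'a list \<Rightarrow> 'a list \<Rightarrow> bool" where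
  "subpath p q \<longleftrightarrow> (\<exists>u w. q = u @ p @ w)"

definition is_quiver :: "('v, 'a) bquiver \<Rightarrow> bool" where
  "is_quiver Q \<longleftrightarrow> finite (verts Q) \<and> finite (arrs Q) \<and>
     (\<forall>a\<in>arrs Q. src Q a \<in> verts Q \<and> tgt Q a \<in> verts Q)"

definition no_isolated :: "('v, 'a) bquiver \<Rightarrow> bool" where
  "no_isolated Q \<longleftrightarrow> (\<forall>v\<in>verts Q. \<exists>a\<in>arrs Q. src Q a = v \<or> tgt Q a = v)"

definition bound_quiver :: "('v, 'a) bquiver \<Rightarrow> bool" where
  "bound_quiver Q \<longleftrightarrow> is_quiver Q \<and> no_isolated Q \<and>
     (\<forall>r\<in>rels Q. is_path Q r \<and> length r \<ge> 2) \<and>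
     (\<exists>n\<ge>1. \<forall>p. is_path Q p \<and> length p = n \<longrightarrow> (\<exists>r\<in>rels Q. subpath r p))"

definition connected_quiver :: "('v, 'a) bquiver \<Rightarrow> bool" where
  "connected_quiver Q \<longleftrightarrow> verts Q \<noteq> {} \<and>
     (\<forall>u\<in>verts Q. \<forall>v\<in>verts Q.
        (u, v) \<in> ({(src Q a, tgt Q a) | a. a \<in> arrs Q} \<union>
                  {(tgt Q a, src Q a) | a. a \<in> arrs Q})\<^sup>*)"

definition gentle :: "('v, 'a) bquiver \<Rightarrow> bool" where
  "gentle Q \<longleftrightarrow> bound_quiver Q \<and> connected_quiver Q \<and>
     (\<forall>r\<in>rels Q. length r = 2) \<and>
     (\<forall>v\<in>verts Q. card {a\<in>arrs Q. src Q a = v} \<le> 2 \<and> card {a\<in>arrs Q. tgt Q a = v} \<le> 2) \<and>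
     (\<forall>\<alpha>\<in>arrs Q.
        card {\<beta>\<in>arrs Q. src Q \<beta> = tgt Q \<alpha> \<and> [\<beta>, \<alpha>] \<notin> rels Q} \<le> 1 \<and>
        card {\<beta>\<in>arrs Q. tgt Q \<beta> = src Q \<alpha> \<and> [\<alpha>, \<beta>] \<notin> rels Q} \<le> 1 \<and>
        card {\<beta>\<in>arrs Q. src Q \<beta> = tgt Q \<alpha> \<and> [\<beta>, \<alpha>] \<in> rels Q} \<le> 1 \<and>
        card {\<beta>\<in>arrs Q. tgt Q \<beta> = src Q \<alpha> \<and> [\<alpha>, \<beta>] \<in> rels Q} \<le> 1)"

definition path_in :: "('v, 'a) bquiver \<Rightarrow> 'a list \<Rightarrow> bool" where
  "path_in Q p \<longleftrightarrow> is_path Q p \<and> \<not> (\<exists>r\<in>rels Q. subpath r p)"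

definition maximal_path :: "('v, 'a) bquiver \<Rightarrow> 'a list \<Rightarrow> bool" where
  "maximal_path Q p \<longleftrightarrow> path_in Q p \<and>
     \<not> (\<exists>q. path_in Q q \<and> length q > length p \<and> subpath p q)"

text \<open>Coextension [\<sigma>]\<Lambda>, with new vertex x and new arrow \<alpha>
(assumed fresh), s \<alpha> = t \<sigma>, t \<alpha> = x.\<close>
definition coext :: "('v, 'a) bquiver \<Rightarrow> 'a list \<Rightarrow> 'v \<Rightarrow> 'a \<Rightarrow> ('v, 'a) bquiver" where
  "coext Q \<sigma> x \<alpha> = Q\<lparr> verts := insert x (verts Q),
                       arrs := insert \<alpha> (arrs Q),
                       src := (src Q)(\<alpha> := tgt Q (hd \<sigma>)),
                       tgt := (tgt Q)(\<alpha> := x),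
                       rels := rels Q \<union> {[\<alpha>, \<alpha>'] | \<alpha>'. \<alpha>' \<in> arrs Q \<and>
                                 tgt Q \<alpha>' = tgt Q (hd \<sigma>) \<and> \<alpha>' \<noteq> hd \<sigma>} \<rparr>"

end

theory Submission
  imports Defs
begin

text \<open>Maximality of \<sigma> = \<alpha>1...\<alpha>l means that no arrow \<beta> leaving t\<sigma> extends it, i.e. every such
  \<beta> has \<beta>\<alpha>1 \<in> R. Gentleness at \<alpha>1 then leaves at most one arrow out of t\<sigma>, so adding \<alpha>
  keeps out-degrees at most 2; gentleness at that arrow forbids relations with the other arrows
  ending in t\<sigma>, which are exactly the arrows \<alpha>' that the new relations \<alpha>\<alpha>' attach to \<alpha>.
  Hence every arrow still has at most one continuation inside and one outside the relations.
  Nilpotency survives because \<alpha> ends at a sink, so it can only be the last arrow of a path.\<close>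

lemma coext_simps [simp]:
  "verts (coext Q \<sigma> x \<alpha>) = insert x (verts Q)"
  "arrs (coext Q \<sigma> x \<alpha>) = insert \<alpha> (arrs Q)"
  "src (coext Q \<sigma> x \<alpha>) = (src Q)(\<alpha> := tgt Q (hd \<sigma>))"
  "tgt (coext Q \<sigma> x \<alpha>) = (tgt Q)(\<alpha> := x)"
  "rels (coext Q \<sigma> x \<alpha>) = rels Q \<union>
     {[\<alpha>, \<alpha>'] | \<alpha>'. \<alpha>' \<in> arrs Q \<and> tgt Q \<alpha>' = tgt Q (hd \<sigma>) \<and> \<alpha>' \<noteq> hd \<sigma>}"
  by (simp_all add: coext_def)

lemma rels_subset_arrs:
  assumes "bound_quiver Q" "r \<in> rels Q"
  shows "set r \<subseteq> arrs Q"
  using assms unfolding bound_quiver_def is_path_def by blast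

lemma subpath_trans: "subpath p q \<Longrightarrow> subpath q r \<Longrightarrow> subpath p r"
  unfolding subpath_def by (metis append.assoc)

lemma subpath_tl: "subpath (tl p) p"
  unfolding subpath_def by (cases p) (auto intro: exI[of _ "[hd p]"])

lemma is_path_coext:
  assumes "\<alpha> \<notin> arrs Q" "is_path Q p"
  shows "is_path (coext Q \<sigma> x \<alpha>) p"
proof -
  have "p ! i \<noteq> \<alpha>" if "i < length p" for i
    using assms that unfolding is_path_def by (metis nth_mem subsetD)
  then show ?thesis
    using assms(2) unfolding is_path_def by auto
qed

lemma src_coext_in_verts:
  assumes "is_quiver Q" "hd \<sigma> \<in> arrs Q" "a \<in> arrs (coext Q \<sigma> x \<alpha>)"
  shows "src (coext Q \<sigma> x \<alpha>) a \<in> verts Q"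
  using assms unfolding is_quiver_def by auto

lemma is_path_coext_tl:
  assumes "is_quiver Q" "hd \<sigma> \<in> arrs Q" "x \<notin> verts Q"
    and p: "is_path (coext Q \<sigma> x \<alpha>) p" "length p \<ge> 2"
  shows "is_path Q (tl p)"
proof -
  let ?Q' = "coext Q \<sigma> x \<alpha>"
  have arrs_p: "p ! i \<in> arrs ?Q'" if "i < length p" for i
    using p(1) that nth_mem unfolding is_path_def by blast
  have links: "src ?Q' (p ! i) = tgt ?Q' (p ! Suc i)" if "Suc i < length p" for i
    using p(1) that unfolding is_path_def by auto
  have not_new: "p ! Suc i \<noteq> \<alpha>" if "Suc i < length p" for i
  proof
    assume "p ! Suc i = \<alpha>"
    then have "src ?Q' (p ! i) = x" using links[OF that] by simp
    then show False
      using src_coext_in_verts[OF assms(1,2) arrs_p] that assms(3) by force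
  qed
  show ?thesis
    unfolding is_path_def
  proof (intro conjI allI impI)
    show "tl p \<noteq> []" using p(2) by (cases p) auto
    show "set (tl p) \<subseteq> arrs Q"
    proof
      fix a assume "a \<in> set (tl p)"
      then obtain i where "Suc i < length p" "a = p ! Suc i"
        by (auto simp: in_set_conv_nth nth_tl less_diff_conv)
      then show "a \<in> arrs Q" using arrs_p not_new by fastforce
    qed
    show "src Q (tl p ! i) = tgt Q (tl p ! Suc i)" if "Suc i < length (tl p)" for i
      using links[of "Suc i"] not_new[of i] not_new[of "Suc i"] that by (auto simp: nth_tl)
  qed
qed

lemma bound_quiver_coext:
  assumes bq: "bound_quiver Q" and "hd \<sigma> \<in> arrs Q" "x \<notin> verts Q" "\<alpha> \<notin> arrs Q"
  shows "bound_quiver (coext Q \<sigma> x \<alpha>)"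
proof -
  let ?Q' = "coext Q \<sigma> x \<alpha>"
  have quiver: "is_quiver Q" and isolated: "no_isolated Q"
    and rel_paths: "\<And>r. r \<in> rels Q \<Longrightarrow> is_path Q r \<and> length r \<ge> 2"
    using bq unfolding bound_quiver_def by auto
  obtain n where "n \<ge> 1" and nilpotent: "\<And>p. is_path Q p \<Longrightarrow> length p = n \<Longrightarrow> \<exists>r\<in>rels Q. subpath r p"
    using bq unfolding bound_quiver_def by blast
  have "is_quiver ?Q'"
    using quiver assms(2) unfolding is_quiver_def by auto
  moreover have "no_isolated ?Q'"
    using isolated assms(4) unfolding no_isolated_def by fastforce
  moreover have "is_path ?Q' r \<and> length r \<ge> 2" if r: "r \<in> rels ?Q'" for r
  proof (cases "r \<in> rels Q")
    case True
    then show ?thesis using rel_paths is_path_coext[OF assms(4)] by blast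
  next
    case False
    then obtain a where "r = [\<alpha>, a]" "a \<in> arrs Q" "tgt Q a = tgt Q (hd \<sigma>)"
      using r by auto
    then show ?thesis using assms(4) unfolding is_path_def by (auto simp: nth_Cons split: nat.split)
  qed
  moreover have "\<exists>r\<in>rels ?Q'. subpath r p" if p: "is_path ?Q' p" "length p = Suc n" for p
  proof -
    have "is_path Q (tl p)"
      using is_path_coext_tl[OF quiver assms(2,3) p(1)] p(2) \<open>n \<ge> 1\<close> by simp
    then obtain r where "r \<in> rels Q" "subpath r (tl p)"
      using nilpotent p(2) by fastforce
    then show ?thesis
      using subpath_trans[OF _ subpath_tl] by auto
  qed
  ultimately show ?thesis
    unfolding bound_quiver_def by (intro conjI exI[of _ "Suc n"]) auto
qed

lemma connected_quiver_coext:
  fixes Q :: "('v, 'a) bquiver"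
  assumes "connected_quiver Q" "is_quiver Q" "hd \<sigma> \<in> arrs Q" "\<alpha> \<notin> arrs Q"
  shows "connected_quiver (coext Q \<sigma> x \<alpha>)"
proof -
  let ?Q' = "coext Q \<sigma> x \<alpha>"
  let ?t = "tgt Q (hd \<sigma>)"
  define edges :: "('v, 'a) bquiver \<Rightarrow> ('v \<times> 'v) set" where
    "edges Q = {(src Q a, tgt Q a) | a. a \<in> arrs Q} \<union> {(tgt Q a, src Q a) | a. a \<in> arrs Q}" for Q
  have "edges Q \<subseteq> edges ?Q'"
    using assms(4) unfolding edges_def by force
  then have old: "(u, v) \<in> (edges ?Q')\<^sup>*" if "u \<in> verts Q" "v \<in> verts Q" for u v
    using assms(1) that rtrancl_mono unfolding connected_quiver_def edges_def by blast
  have "(x, ?t) \<in> edges ?Q'" "(?t, x) \<in> edges ?Q'"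
    unfolding edges_def by force+
  moreover have "?t \<in> verts Q"
    using assms(2,3) unfolding is_quiver_def by blast
  ultimately have "(u, v) \<in> (edges ?Q')\<^sup>*" if "u \<in> verts ?Q'" "v \<in> verts ?Q'" for u v
    using that old by (auto intro: converse_rtrancl_into_rtrancl rtrancl_into_rtrancl)
  then show ?thesis
    unfolding connected_quiver_def edges_def by auto
qed

lemma subpath_Cons_length2:
  assumes "subpath r (b # s)" "length r = 2" "s \<noteq> []"
  shows "r = [b, hd s] \<or> subpath r s"
proof -
  obtain u w where uw: "b # s = u @ r @ w"
    using assms(1) unfolding subpath_def by blast
  show ?thesis
  proof (cases u)
    case Nil
    obtain r0 r1 where "r = [r0, r1]"
      using assms(2) by (auto simp: length_Suc_conv numeral_2_eq_2)
    with uw Nil show ?thesis by auto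
  next
    case (Cons c u')
    with uw show ?thesis unfolding subpath_def by auto
  qed
qed

lemma path_in_Cons:
  assumes "path_in Q \<sigma>" "\<forall>r\<in>rels Q. length r = 2"
    and "\<beta> \<in> arrs Q" "src Q \<beta> = tgt Q (hd \<sigma>)" "[\<beta>, hd \<sigma>] \<notin> rels Q"
  shows "path_in Q (\<beta> # \<sigma>)"
proof -
  have \<sigma>: "is_path Q \<sigma>" using assms(1) unfolding path_in_def by blast
  then have "\<sigma> \<noteq> []" unfolding is_path_def by blast
  have "is_path Q (\<beta> # \<sigma>)"
    unfolding is_path_def
  proof (intro conjI allI impI)
    show "set (\<beta> # \<sigma>) \<subseteq> arrs Q" using \<sigma> assms(3) unfolding is_path_def by auto
    show "src Q ((\<beta> # \<sigma>) ! i) = tgt Q ((\<beta> # \<sigma>) ! Suc i)" if "Suc i < length (\<beta> # \<sigma>)" for i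
      using \<sigma> that assms(4) \<open>\<sigma> \<noteq> []\<close> unfolding is_path_def
      by (cases i) (auto simp: hd_conv_nth)
  qed simp
  moreover have "\<not> subpath r (\<beta> # \<sigma>)" if r: "r \<in> rels Q" for r
  proof
    assume "subpath r (\<beta> # \<sigma>)"
    moreover have "length r = 2" using assms(2) r by blast
    ultimately have "r = [\<beta>, hd \<sigma>] \<or> subpath r \<sigma>"
      using \<open>\<sigma> \<noteq> []\<close> by (rule subpath_Cons_length2)
    then show False
      using assms(1,5) r unfolding path_in_def by blast
  qed
  ultimately show ?thesis
    unfolding path_in_def by blast
qed

lemma maximal_path_extension_in_rels:
  assumes "maximal_path Q \<sigma>" "\<forall>r\<in>rels Q. length r = 2"
    and "\<beta> \<in> arrs Q" "src Q \<beta> = tgt Q (hd \<sigma>)"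
  shows "[\<beta>, hd \<sigma>] \<in> rels Q"
proof (rule ccontr)
  assume "[\<beta>, hd \<sigma>] \<notin> rels Q"
  then have "path_in Q (\<beta> # \<sigma>)"
    using assms(1) unfolding maximal_path_def by (intro path_in_Cons assms(2-4)) blast+
  moreover have "subpath \<sigma> (\<beta> # \<sigma>)"
    unfolding subpath_def by (auto intro: exI[of _ "[\<beta>]"])
  ultimately show False
    using assms(1) unfolding maximal_path_def by (metis impossible_Cons not_le)
qed

definition gentle_at :: "('v, 'a) bquiver \<Rightarrow> 'a \<Rightarrow> bool" where
  "gentle_at Q \<gamma> \<longleftrightarrow>
     card {\<beta>\<in>arrs Q. src Q \<beta> = tgt Q \<gamma> \<and> [\<beta>, \<gamma>] \<notin> rels Q} \<le> 1 \<and>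
     card {\<beta>\<in>arrs Q. tgt Q \<beta> = src Q \<gamma> \<and> [\<gamma>, \<beta>] \<notin> rels Q} \<le> 1 \<and>
     card {\<beta>\<in>arrs Q. src Q \<beta> = tgt Q \<gamma> \<and> [\<beta>, \<gamma>] \<in> rels Q} \<le> 1 \<and>
     card {\<beta>\<in>arrs Q. tgt Q \<beta> = src Q \<gamma> \<and> [\<gamma>, \<beta>] \<in> rels Q} \<le> 1"

definition degree_le2 :: "('v, 'a) bquiver \<Rightarrow> bool" where
  "degree_le2 Q \<longleftrightarrow> (\<forall>v\<in>verts Q.
     card {a\<in>arrs Q. src Q a = v} \<le> 2 \<and> card {a\<in>arrs Q. tgt Q a = v} \<le> 2)"

lemma gentle_iff:
  "gentle Q \<longleftrightarrow> bound_quiver Q \<and> connected_quiver Q \<and> (\<forall>r\<in>rels Q. length r = 2) \<and>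
     degree_le2 Q \<and> (\<forall>\<gamma>\<in>arrs Q. gentle_at Q \<gamma>)"
  unfolding gentle_def gentle_at_def degree_le2_def ..

locale coextension =
  fixes Q :: "('v, 'a) bquiver" and \<sigma> :: "'a list" and x :: 'v and \<alpha> :: 'a
  assumes gentle: "gentle Q"
    and maximal: "maximal_path Q \<sigma>"
    and x_fresh: "x \<notin> verts Q"
    and \<alpha>_fresh: "\<alpha> \<notin> arrs Q"
begin

abbreviation "Q' \<equiv> coext Q \<sigma> x \<alpha>"
abbreviation "t\<sigma> \<equiv> tgt Q (hd \<sigma>)"

lemma bound: "bound_quiver Q"
  and connected: "connected_quiver Q"
  and rels_length2: "\<forall>r\<in>rels Q. length r = 2"
  and degrees: "degree_le2 Q"
  and gentle_at_arrs: "\<gamma> \<in> arrs Q \<Longrightarrow> gentle_at Q \<gamma>"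
  using gentle unfolding gentle_iff by auto

lemma quiver: "is_quiver Q"
  using bound unfolding bound_quiver_def by blast

lemma finite_arrs: "finite {a\<in>arrs Q. P a}"
  using quiver unfolding is_quiver_def by auto

lemma hd_\<sigma>_arr: "hd \<sigma> \<in> arrs Q"
  using maximal unfolding maximal_path_def path_in_def is_path_def by auto

lemma t\<sigma>_vert: "t\<sigma> \<in> verts Q"
  using quiver hd_\<sigma>_arr unfolding is_quiver_def by blast

lemma src_vert: "a \<in> arrs Q \<Longrightarrow> src Q a \<in> verts Q"
  and tgt_vert: "a \<in> arrs Q \<Longrightarrow> tgt Q a \<in> verts Q"
  using quiver unfolding is_quiver_def by auto

lemma rels_arrs: "[\<beta>, \<gamma>] \<in> rels Q \<Longrightarrow> \<beta> \<in> arrs Q \<and> \<gamma> \<in> arrs Q"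
  using rels_subset_arrs[OF bound] by fastforce

lemma out_arrow_in_rels: "\<beta> \<in> arrs Q \<Longrightarrow> src Q \<beta> = t\<sigma> \<Longrightarrow> [\<beta>, hd \<sigma>] \<in> rels Q"
  using maximal_path_extension_in_rels[OF maximal rels_length2] .

lemma out_degree_t\<sigma>: "card {\<beta>\<in>arrs Q. src Q \<beta> = t\<sigma>} \<le> 1"
proof -
  have "{\<beta>\<in>arrs Q. src Q \<beta> = t\<sigma>} = {\<beta>\<in>arrs Q. src Q \<beta> = tgt Q (hd \<sigma>) \<and> [\<beta>, hd \<sigma>] \<in> rels Q}"
    using out_arrow_in_rels by blast
  then show ?thesis
    using gentle_at_arrs[OF hd_\<sigma>_arr] unfolding gentle_at_def by simp
qed

lemma no_rel_into_t\<sigma>: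
  assumes "\<gamma> \<in> arrs Q" "tgt Q \<gamma> = t\<sigma>" "\<gamma> \<noteq> hd \<sigma>" "\<beta> \<in> arrs Q" "src Q \<beta> = t\<sigma>"
  shows "[\<beta>, \<gamma>] \<notin> rels Q"
proof
  assume "[\<beta>, \<gamma>] \<in> rels Q"
  then have "{\<gamma>, hd \<sigma>} \<subseteq> {\<gamma>'\<in>arrs Q. tgt Q \<gamma>' = src Q \<beta> \<and> [\<beta>, \<gamma>'] \<in> rels Q}"
    using assms hd_\<sigma>_arr out_arrow_in_rels by auto
  then have "card {\<gamma>, hd \<sigma>} \<le> 1"
    using gentle_at_arrs[OF assms(4)] card_mono[OF finite_arrs] unfolding gentle_at_def by (meson order_trans)
  then show False using assms(3) by simp
qed

lemma card_out_in_le2: "card {a\<in>arrs Q. src Q a = v} \<le> 2 \<and> card {a\<in>arrs Q. tgt Q a = v} \<le> 2"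
proof (cases "v \<in> verts Q")
  case True
  then show ?thesis using degrees unfolding degree_le2_def by blast
next
  case False
  then have "{a\<in>arrs Q. src Q a = v} = {}" "{a\<in>arrs Q. tgt Q a = v} = {}"
    using src_vert tgt_vert by blast+
  then show ?thesis by (simp only: card.empty) simp
qed

lemma degree_le2_coext: "degree_le2 Q'"
  unfolding degree_le2_def
proof (intro ballI conjI)
  fix v
  have out: "{a\<in>arrs Q'. src Q' a = v} =
      (if v = t\<sigma> then insert \<alpha> {a\<in>arrs Q. src Q a = v} else {a\<in>arrs Q. src Q a = v})"
    using \<alpha>_fresh by auto
  show "card {a\<in>arrs Q'. src Q' a = v} \<le> 2"
  proof (cases "v = t\<sigma>")
    case True
    have "card (insert \<alpha> {a\<in>arrs Q. src Q a = v}) \<le> Suc (card {a\<in>arrs Q. src Q a = v})"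
      by (rule card_insert_le_m1) (simp_all add: finite_arrs)
    then show ?thesis
      using out True out_degree_t\<sigma> by simp
  next
    case False
    then show ?thesis using out card_out_in_le2 by simp
  qed
  have "{a\<in>arrs Q'. tgt Q' a = v} = (if v = x then {\<alpha>} else {a\<in>arrs Q. tgt Q a = v})"
    using \<alpha>_fresh tgt_vert x_fresh by auto
  then show "card {a\<in>arrs Q'. tgt Q' a = v} \<le> 2"
    using card_out_in_le2 by simp
qed

lemma src_coext_ne_x: "a \<in> arrs Q' \<Longrightarrow> src Q' a \<noteq> x"
  using src_coext_in_verts[OF quiver hd_\<sigma>_arr, of a x \<alpha>] x_fresh by force

lemma gentle_at_coext_new: "gentle_at Q' \<alpha>"
proof -
  have "tgt Q' \<alpha> = x" by simp
  then have succ: "{\<beta>\<in>arrs Q'. src Q' \<beta> = tgt Q' \<alpha> \<and> P \<beta>} = {}" for P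
    using src_coext_ne_x by (simp only:) blast
  have pred_nonrel: "{\<beta>\<in>arrs Q'. tgt Q' \<beta> = src Q' \<alpha> \<and> [\<alpha>, \<beta>] \<notin> rels Q'} = {hd \<sigma>}"
    using hd_\<sigma>_arr \<alpha>_fresh x_fresh t\<sigma>_vert rels_arrs by auto
  have pred_rel: "{\<beta>\<in>arrs Q'. tgt Q' \<beta> = src Q' \<alpha> \<and> [\<alpha>, \<beta>] \<in> rels Q'} =
      {\<beta>\<in>arrs Q. tgt Q \<beta> = t\<sigma>} - {hd \<sigma>}"
    using \<alpha>_fresh x_fresh t\<sigma>_vert rels_arrs by auto
  have "card {\<beta>\<in>arrs Q. tgt Q \<beta> = t\<sigma>} \<le> 2"
    using card_out_in_le2 by blast
  then have "card ({\<beta>\<in>arrs Q. tgt Q \<beta> = t\<sigma>} - {hd \<sigma>}) \<le> 1"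
    using hd_\<sigma>_arr finite_arrs by (simp add: card_Diff_singleton)
  then show ?thesis
    unfolding gentle_at_def succ pred_nonrel pred_rel by simp
qed

lemma gentle_at_coext_old:
  assumes \<gamma>: "\<gamma> \<in> arrs Q"
  shows "gentle_at Q' \<gamma>"
proof -
  have old: "\<beta> \<in> arrs Q \<Longrightarrow> [\<beta>, \<gamma>] \<in> rels Q' \<longleftrightarrow> [\<beta>, \<gamma>] \<in> rels Q" for \<beta>
    using \<alpha>_fresh by auto
  have new: "[\<alpha>, \<gamma>] \<in> rels Q' \<longleftrightarrow> tgt Q \<gamma> = t\<sigma> \<and> \<gamma> \<noteq> hd \<sigma>"
    using \<gamma> \<alpha>_fresh rels_arrs by auto
  have succ: "{\<beta>\<in>arrs Q'. src Q' \<beta> = tgt Q' \<gamma> \<and> P \<beta>} =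
      (if tgt Q \<gamma> = t\<sigma> \<and> P \<alpha> then {\<alpha>} else {}) \<union> {\<beta>\<in>arrs Q. src Q \<beta> = tgt Q \<gamma> \<and> P \<beta>}" for P
    using \<gamma> \<alpha>_fresh by auto
  have "card {\<beta>\<in>arrs Q'. src Q' \<beta> = tgt Q' \<gamma> \<and> [\<beta>, \<gamma>] \<notin> rels Q'} \<le> 1"
  proof (cases "\<gamma> = hd \<sigma>")
    case True
    then have none: "{\<beta>\<in>arrs Q. src Q \<beta> = tgt Q \<gamma> \<and> [\<beta>, \<gamma>] \<notin> rels Q'} = {}"
      using old out_arrow_in_rels by auto
    show ?thesis unfolding succ none by (simp del: coext_simps)
  next
    case False
    then have "{\<beta>\<in>arrs Q. src Q \<beta> = tgt Q \<gamma> \<and> [\<beta>, \<gamma>] \<notin> rels Q'} =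
        {\<beta>\<in>arrs Q. src Q \<beta> = tgt Q \<gamma> \<and> [\<beta>, \<gamma>] \<notin> rels Q}"
      using old by blast
    moreover have "card {\<beta>\<in>arrs Q. src Q \<beta> = tgt Q \<gamma> \<and> [\<beta>, \<gamma>] \<notin> rels Q} \<le> 1"
      using gentle_at_arrs[OF \<gamma>] unfolding gentle_at_def by blast
    ultimately show ?thesis
      using False new unfolding succ by (auto simp del: coext_simps)
  qed
  moreover have "card {\<beta>\<in>arrs Q'. src Q' \<beta> = tgt Q' \<gamma> \<and> [\<beta>, \<gamma>] \<in> rels Q'} \<le> 1"
  proof (cases "tgt Q \<gamma> = t\<sigma> \<and> \<gamma> \<noteq> hd \<sigma>")
    case True
    then have none: "{\<beta>\<in>arrs Q. src Q \<beta> = tgt Q \<gamma> \<and> [\<beta>, \<gamma>] \<in> rels Q'} = {}"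
      using old no_rel_into_t\<sigma>[OF \<gamma>] by auto
    show ?thesis unfolding succ none by (simp del: coext_simps)
  next
    case False
    then have "{\<beta>\<in>arrs Q. src Q \<beta> = tgt Q \<gamma> \<and> [\<beta>, \<gamma>] \<in> rels Q'} =
        {\<beta>\<in>arrs Q. src Q \<beta> = tgt Q \<gamma> \<and> [\<beta>, \<gamma>] \<in> rels Q}"
      using old by blast
    moreover have "card {\<beta>\<in>arrs Q. src Q \<beta> = tgt Q \<gamma> \<and> [\<beta>, \<gamma>] \<in> rels Q} \<le> 1"
      using gentle_at_arrs[OF \<gamma>] unfolding gentle_at_def by blast
    ultimately show ?thesis
      using False new unfolding succ by (auto simp del: coext_simps)
  qed
  moreover have "{\<beta>\<in>arrs Q'. tgt Q' \<beta> = src Q' \<gamma> \<and> [\<gamma>, \<beta>] \<notin> rels Q'} =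
      {\<beta>\<in>arrs Q. tgt Q \<beta> = src Q \<gamma> \<and> [\<gamma>, \<beta>] \<notin> rels Q}"
    "{\<beta>\<in>arrs Q'. tgt Q' \<beta> = src Q' \<gamma> \<and> [\<gamma>, \<beta>] \<in> rels Q'} =
      {\<beta>\<in>arrs Q. tgt Q \<beta> = src Q \<gamma> \<and> [\<gamma>, \<beta>] \<in> rels Q}"
    using \<gamma> \<alpha>_fresh x_fresh src_vert by auto
  ultimately show ?thesis
    using gentle_at_arrs[OF \<gamma>] unfolding gentle_at_def by simp
qed

lemma gentle_coext: "gentle Q'"
  unfolding gentle_iff
proof (intro conjI ballI)
  show "bound_quiver Q'"
    using bound_quiver_coext[OF bound hd_\<sigma>_arr x_fresh \<alpha>_fresh] .
  show "connected_quiver Q'"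
    using connected_quiver_coext[OF connected quiver hd_\<sigma>_arr \<alpha>_fresh] .
  show "length r = 2" if "r \<in> rels Q'" for r
    using that rels_length2 by auto
  show "degree_le2 Q'" by (rule degree_le2_coext)
  show "gentle_at Q' \<gamma>" if "\<gamma> \<in> arrs Q'" for \<gamma>
    using that gentle_at_coext_new gentle_at_coext_old by auto
qed

end

theorem lemma1p5:
  fixes Q :: "('v, 'a) bquiver" and \<sigma> :: "'a list" and x :: 'v and \<alpha> :: 'a
  assumes "gentle Q"
    and "maximal_path Q \<sigma>"
    and "x \<notin> verts Q"
    and "\<alpha> \<notin> arrs Q"
  shows "gentle (coext Q \<sigma> x \<alpha>)"
proof -
  interpret coextension Q \<sigma> x \<alpha>
    using assms by unfold_locales
  show ?thesis by (rule gentle_coext)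
qed

end
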